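(* Let $\phi$ be a circuit all of whose constraints are windable. Then the signature $[\![\phi]\!]$ is windable.
   Context: For $x,y\in\{0,1\}^J$, $x\oplus y$ is coordinatewise addition mod 2, and $\mathbf S$ is the characteristic vector of $S\subseteq J$. For $z\in\{0,1\}^J$, $\mathrm{Match}'(z)$ is the set of partitions of $\{i:z_i=1\}$ into blocks of size 1 or 2. $F:\{0,1\}^J\to\mathbb{Q}_{\ge0}$ is windable if there exist $B(x,y,M)\ge0$ for all $x,y\in\{0,1\}^J$ and $M\in\mathrm{Match}'(x\oplus y)$ with (1) $F(x)F(y)=\sum_{M\in\mathrm{Match}'(x\oplus y)}B(x,y,M)$ for all $x,y$, and (2) $B(x,y,M)=B(x\oplus\mathbf S,y\oplus\mathbf S,M)$ for all $x,y$ and all $S\in M\in\mathrm{Match}'(x\oplus y)$. A circuit $\phi$ consists of: a finite set $J$ of incidences; a finite set $V$ of vertices with sets $J_v$ partitioning $J$; a set $A\subseteq J$ of external edges; a partition $E$ of $J\setminus A$ into pairs (internal edges); and constraints $F_v:\{0,1\}^{J_v}\to\mathbb{Q}_{\ge0}$. An assignment is $x\in\{0,1\}^J$ with $x_i=x_j$ for all $\{i,j\}\in E$; $\mathrm{wt}_\phi(x)=\prod_vF_v(x|_{J_v})$; the signature is $[\![\phi]\!]:\{0,1\}^A\to\mathbb{Q}_{\ge0}$, $[\![\phi]\!](x)=\sum\mathrm{wt}_\phi(x')$ over assignments $x'$ extending $x$. *)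

theory Defs
  imports Complex_Main
begin

text \<open>Vectors in {0,1}^J are represented by subsets of J (their support);
  coordinatewise addition mod 2 is symmetric difference, and the
  characteristic vector of S is S itself.\<close>

definition xor_set :: "'a set \<Rightarrow> 'a set \<Rightarrow> 'a set" where
  "xor_set x y = (x - y) \<union> (y - x)"

definition Match' :: "'a set \<Rightarrow> 'a set set set" where
  "Match' z = {M. (\<forall>S\<in>M. S \<noteq> {} \<and> (card S = 1 \<or> card S = 2))
                 \<and> (\<forall>S\<in>M. \<forall>T\<in>M. S \<noteq> T \<longrightarrow> S \<inter> T = {})
                 \<and> \<Union>M = z}"

definition windable :: "'a set \<Rightarrow> ('a set \<Rightarrow> rat) \<Rightarrow> bool" where
  "windable J F \<longleftrightarrow>
     (\<forall>x. x \<subseteq> J \<longrightarrow> F x \<ge> 0) \<and>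
     (\<exists>B :: 'a set \<Rightarrow> 'a set \<Rightarrow> 'a set set \<Rightarrow> rat.
        (\<forall>x y M. x \<subseteq> J \<longrightarrow> y \<subseteq> J \<longrightarrow> M \<in> Match' (xor_set x y) \<longrightarrow> B x y M \<ge> 0) \<and>
        (\<forall>x y. x \<subseteq> J \<longrightarrow> y \<subseteq> J \<longrightarrow>
            F x * F y = (\<Sum>M\<in>Match' (xor_set x y). B x y M)) \<and>
        (\<forall>x y M S. x \<subseteq> J \<longrightarrow> y \<subseteq> J \<longrightarrow> M \<in> Match' (xor_set x y) \<longrightarrow> S \<in> M \<longrightarrow>
            B x y M = B (xor_set x S) (xor_set y S) M))"

text \<open>A circuit: incidences J, vertices V with incidence sets Jv v partitioning J,
  external edges A \<subseteq> J, internal edges E partitioning J - A into pairs,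
  constraints F v : {0,1}^(Jv v) \<rightarrow> Q_{\<ge>0}.\<close>
definition circuit ::
  "'i set \<Rightarrow> 'v set \<Rightarrow> ('v \<Rightarrow> 'i set) \<Rightarrow> 'i set \<Rightarrow> 'i set set \<Rightarrow> ('v \<Rightarrow> 'i set \<Rightarrow> rat) \<Rightarrow> bool"
  where
  "circuit J V Jv A E F \<longleftrightarrow>
     finite J \<and> finite V \<and>
     (\<forall>v\<in>V. Jv v \<subseteq> J) \<and> (\<Union>v\<in>V. Jv v) = J \<and>
     (\<forall>v\<in>V. \<forall>w\<in>V. v \<noteq> w \<longrightarrow> Jv v \<inter> Jv w = {}) \<and>
     A \<subseteq> J \<and>
     (\<forall>e\<in>E. card e = 2) \<and>
     (\<forall>e\<in>E. \<forall>e'\<in>E. e \<noteq> e' \<longrightarrow> e \<inter> e' = {}) \<and>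
     \<Union>E = J - A \<and>
     (\<forall>v\<in>V. \<forall>x. x \<subseteq> Jv v \<longrightarrow> F v x \<ge> 0)"

definition assignment :: "'i set \<Rightarrow> 'i set set \<Rightarrow> 'i set \<Rightarrow> bool" where
  "assignment J E x \<longleftrightarrow> x \<subseteq> J \<and> (\<forall>e\<in>E. \<forall>i\<in>e. \<forall>j\<in>e. (i \<in> x \<longleftrightarrow> j \<in> x))"

definition wt :: "'v set \<Rightarrow> ('v \<Rightarrow> 'i set) \<Rightarrow> ('v \<Rightarrow> 'i set \<Rightarrow> rat) \<Rightarrow> 'i set \<Rightarrow> rat" where
  "wt V Jv F x = (\<Prod>v\<in>V. F v (x \<inter> Jv v))"

definition signature ::
  "'i set \<Rightarrow> 'v set \<Rightarrow> ('v \<Rightarrow> 'i set) \<Rightarrow> 'i set \<Rightarrow> 'i set set \<Rightarrow> ('v \<Rightarrow> 'i set \<Rightarrow> rat) \<Rightarrow> 'i set \<Rightarrow> rat"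
  where
  "signature J V Jv A E F a = (\<Sum>x\<in>{x. assignment J E x \<and> x \<inter> A = a}. wt V Jv F x)"

end

theory Submission
  imports Defs
begin

text \<open>Windability is preserved by the two operations that build a signature from its
  constraints. Tensoring functions on disjoint sets of coordinates: a matching of the product
  splits into matchings of the factors, and the witness is the product of the witnesses.
  Contracting two coordinates i, j into an internal edge, G' a = G a + G (a \<union> {i,j}): the new
  witness sums the old one over the values of the edge on both sides, grouped by the matching
  obtained by deleting i and j, which merges the blocks through i and j into one block of size
  at most two. Invariance under flipping such a merged block S follows by flipping the two old
  blocks in turn, which also toggles the value of the edge on both sides. The signature of a
  circuit is the product of its constraints contracted along every internal edge, so induction
  on the internal edges proves the theorem.\<close>

locale winding =
  fixes J :: "'a set" and F :: "'a set \<Rightarrow> rat" and B :: "'a set \<Rightarrow> 'a set \<Rightarrow> 'a set set \<Rightarrow> rat"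
  assumes F_nonneg: "x \<subseteq> J \<Longrightarrow> 0 \<le> F x"
    and B_nonneg: "x \<subseteq> J \<Longrightarrow> y \<subseteq> J \<Longrightarrow> M \<in> Match' (xor_set x y) \<Longrightarrow> 0 \<le> B x y M"
    and product_eq: "x \<subseteq> J \<Longrightarrow> y \<subseteq> J \<Longrightarrow> F x * F y = (\<Sum>M\<in>Match' (xor_set x y). B x y M)"
    and flip_invariant: "x \<subseteq> J \<Longrightarrow> y \<subseteq> J \<Longrightarrow> M \<in> Match' (xor_set x y) \<Longrightarrow> S \<in> M \<Longrightarrow>
      B x y M = B (xor_set x S) (xor_set y S) M"

lemma windable_iff_winding: "windable J F \<longleftrightarrow> (\<exists>B. winding J F B)"
  unfolding windable_def winding_def by simp

lemma windable_cong:
  assumes "windable J F" "\<And>x. x \<subseteq> J \<Longrightarrow> F x = G x"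
  shows "windable J G"
proof -
  obtain B where "winding J F B" using assms(1) windable_iff_winding by blast
  then have "winding J G B"
    by (simp add: winding_def assms(2))
  then show ?thesis using windable_iff_winding by blast
qed

lemma xor_set_Int: "xor_set (x \<inter> A) (y \<inter> A) = xor_set x y \<inter> A"
  unfolding xor_set_def by auto

lemma xor_set_xor_set_cancel [simp]: "xor_set (xor_set x S) (xor_set y S) = xor_set x y"
  unfolding xor_set_def by auto

lemma xor_set_empty [simp]: "xor_set x {} = x"
  unfolding xor_set_def by auto

lemma xor_set_xor_set_same [simp]: "xor_set (xor_set x S) S = x"
  unfolding xor_set_def by auto

lemma xor_set_subset: "x \<subseteq> J \<Longrightarrow> y \<subseteq> J \<Longrightarrow> xor_set x y \<subseteq> J"
  unfolding xor_set_def by auto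

lemma Match'I:
  assumes "\<And>S. S \<in> M \<Longrightarrow> S \<noteq> {} \<and> (card S = 1 \<or> card S = 2)"
    and "\<And>S T. S \<in> M \<Longrightarrow> T \<in> M \<Longrightarrow> S \<noteq> T \<Longrightarrow> S \<inter> T = {}"
    and "\<Union>M = z"
  shows "M \<in> Match' z"
  using assms unfolding Match'_def by auto

lemma Union_Match': "M \<in> Match' z \<Longrightarrow> \<Union>M = z"
  unfolding Match'_def by auto

lemma Match'_block_subset: "M \<in> Match' z \<Longrightarrow> S \<in> M \<Longrightarrow> S \<subseteq> z"
  unfolding Match'_def by auto

lemma Match'_disjoint: "M \<in> Match' z \<Longrightarrow> S \<in> M \<Longrightarrow> T \<in> M \<Longrightarrow> S \<noteq> T \<Longrightarrow> S \<inter> T = {}"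
  unfolding Match'_def by auto

lemma Match'_block:
  assumes "M \<in> Match' z" "S \<in> M"
  shows "S \<noteq> {}" "finite S" "card S \<le> 2"
proof -
  have "S \<noteq> {} \<and> (card S = 1 \<or> card S = 2)" using assms unfolding Match'_def by auto
  then show "S \<noteq> {}" "finite S" "card S \<le> 2" using card_ge_0_finite by force+
qed

lemma Match'_empty: "Match' {} = {{}}"
  unfolding Match'_def by auto

lemma finite_Match': "finite z \<Longrightarrow> finite (Match' z)"
  by (rule finite_subset[of _ "Pow (Pow z)"]) (auto simp: Match'_def)

lemma Match'_restrict:
  assumes "M \<in> Match' z" "\<And>S. S \<in> M \<Longrightarrow> S \<subseteq> A \<or> S \<inter> A = {}"
  shows "{S\<in>M. S \<subseteq> A} \<in> Match' (z \<inter> A)"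
proof (rule Match'I)
  show "\<Union>{S\<in>M. S \<subseteq> A} = z \<inter> A"
    using Union_Match'[OF assms(1)] assms(2) by blast
qed (use assms(1) in \<open>auto simp: Match'_def\<close>)

lemma Match'_Un:
  assumes M1: "M1 \<in> Match' z1" and M2: "M2 \<in> Match' z2" and "z1 \<inter> z2 = {}"
  shows "M1 \<union> M2 \<in> Match' (z1 \<union> z2)"
proof (rule Match'I)
  show "S \<inter> T = {}" if "S \<in> M1 \<union> M2" "T \<in> M1 \<union> M2" "S \<noteq> T" for S T
  proof -
    have "S \<subseteq> z1 \<and> T \<subseteq> z2 \<or> S \<subseteq> z2 \<and> T \<subseteq> z1 \<or> S \<inter> T = {}"
      using that Match'_disjoint[OF M1] Match'_disjoint[OF M2]
        Match'_block_subset[OF M1] Match'_block_subset[OF M2] by blast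
    then show ?thesis using assms(3) by blast
  qed
qed (use assms in \<open>auto simp: Match'_def\<close>)

lemma bij_betw_Match'_split:
  assumes disj: "A1 \<inter> A2 = {}" and z: "z \<subseteq> A1 \<union> A2"
  shows "bij_betw (\<lambda>M. ({S\<in>M. S \<subseteq> A1}, {S\<in>M. S \<subseteq> A2}))
    {M \<in> Match' z. \<forall>S\<in>M. S \<subseteq> A1 \<or> S \<subseteq> A2} (Match' (z \<inter> A1) \<times> Match' (z \<inter> A2))"
proof (rule bij_betw_byWitness[where f' = "\<lambda>(M1, M2). M1 \<union> M2"])
  show "\<forall>M \<in> {M \<in> Match' z. \<forall>S\<in>M. S \<subseteq> A1 \<or> S \<subseteq> A2}.
      (\<lambda>(M1, M2). M1 \<union> M2) ({S\<in>M. S \<subseteq> A1}, {S\<in>M. S \<subseteq> A2}) = M"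
    by auto
  have blocks: "S \<subseteq> A \<and> S \<noteq> {}" if "M \<in> Match' (z \<inter> A)" "S \<in> M" for M A S
    using Match'_block_subset[OF that] Match'_block(1)[OF that] by blast
  show "\<forall>p \<in> Match' (z \<inter> A1) \<times> Match' (z \<inter> A2).
      (\<lambda>M. ({S\<in>M. S \<subseteq> A1}, {S\<in>M. S \<subseteq> A2})) ((\<lambda>(M1, M2). M1 \<union> M2) p) = p"
  proof
    fix p assume "p \<in> Match' (z \<inter> A1) \<times> Match' (z \<inter> A2)"
    then obtain M1 M2 where p: "p = (M1, M2)" "M1 \<in> Match' (z \<inter> A1)" "M2 \<in> Match' (z \<inter> A2)"
      by blast
    have "S \<notin> M2" if "S \<subseteq> A1" for S
      using blocks[OF p(3)] that disj by blast
    moreover have "S \<notin> M1" if "S \<subseteq> A2" for S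
      using blocks[OF p(2)] that disj by blast
    ultimately have "{S \<in> M1 \<union> M2. S \<subseteq> A1} = M1" "{S \<in> M1 \<union> M2. S \<subseteq> A2} = M2"
      using blocks[OF p(2)] blocks[OF p(3)] by blast+
    then show "(\<lambda>M. ({S\<in>M. S \<subseteq> A1}, {S\<in>M. S \<subseteq> A2})) ((\<lambda>(M1, M2). M1 \<union> M2) p) = p"
      using p(1) by simp
  qed
  show "(\<lambda>M. ({S\<in>M. S \<subseteq> A1}, {S\<in>M. S \<subseteq> A2})) ` {M \<in> Match' z. \<forall>S\<in>M. S \<subseteq> A1 \<or> S \<subseteq> A2}
      \<subseteq> Match' (z \<inter> A1) \<times> Match' (z \<inter> A2)"
  proof (rule image_subsetI)
    fix M assume M: "M \<in> {M \<in> Match' z. \<forall>S\<in>M. S \<subseteq> A1 \<or> S \<subseteq> A2}"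
    then have "\<forall>S\<in>M. S \<subseteq> A1 \<or> S \<inter> A1 = {}" "\<forall>S\<in>M. S \<subseteq> A2 \<or> S \<inter> A2 = {}"
      using disj by blast+
    with M show "({S\<in>M. S \<subseteq> A1}, {S\<in>M. S \<subseteq> A2}) \<in> Match' (z \<inter> A1) \<times> Match' (z \<inter> A2)"
      by (simp add: Match'_restrict)
  qed
  show "(\<lambda>(M1, M2). M1 \<union> M2) ` (Match' (z \<inter> A1) \<times> Match' (z \<inter> A2))
      \<subseteq> {M \<in> Match' z. \<forall>S\<in>M. S \<subseteq> A1 \<or> S \<subseteq> A2}"
  proof (rule image_subsetI)
    fix p assume "p \<in> Match' (z \<inter> A1) \<times> Match' (z \<inter> A2)"
    then obtain M1 M2 where p: "p = (M1, M2)" and M: "M1 \<in> Match' (z \<inter> A1)" "M2 \<in> Match' (z \<inter> A2)"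
      by blast
    have "(z \<inter> A1) \<union> (z \<inter> A2) = z" "(z \<inter> A1) \<inter> (z \<inter> A2) = {}" using disj z by blast+
    then have "M1 \<union> M2 \<in> Match' z" using Match'_Un[OF M] by simp
    moreover have "\<forall>S\<in>M1 \<union> M2. S \<subseteq> A1 \<or> S \<subseteq> A2"
      using blocks[OF M(1)] blocks[OF M(2)] by blast
    ultimately show "(\<lambda>(M1, M2). M1 \<union> M2) p \<in> {M \<in> Match' z. \<forall>S\<in>M. S \<subseteq> A1 \<or> S \<subseteq> A2}"
      using p by simp
  qed
qed

lemma windable_tensor:
  assumes fin: "finite A1" "finite A2" and disj: "A1 \<inter> A2 = {}"
    and "windable A1 G1" "windable A2 G2"
  shows "windable (A1 \<union> A2) (\<lambda>a. G1 (a \<inter> A1) * G2 (a \<inter> A2))"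
proof -
  obtain B1 B2 where "winding A1 G1 B1" "winding A2 G2 B2"
    using assms(4,5) windable_iff_winding by blast
  then interpret W1: winding A1 G1 B1 + W2: winding A2 G2 B2 .
  define separated where "separated M = (\<forall>S\<in>M. S \<subseteq> A1 \<or> S \<subseteq> A2)" for M :: "'a set set"
  define B where "B x y M = (if separated M
    then B1 (x \<inter> A1) (y \<inter> A1) {S\<in>M. S \<subseteq> A1} * B2 (x \<inter> A2) (y \<inter> A2) {S\<in>M. S \<subseteq> A2}
    else 0)" for x y M
  have restrict: "{S\<in>M. S \<subseteq> A} \<in> Match' (xor_set (x \<inter> A) (y \<inter> A))"
    if "M \<in> Match' (xor_set x y)" "separated M" "A = A1 \<or> A = A2" for M x y A
    using that disj unfolding xor_set_Int separated_def by (intro Match'_restrict) blast+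
  have "winding (A1 \<union> A2) (\<lambda>a. G1 (a \<inter> A1) * G2 (a \<inter> A2)) B"
  proof
    fix x y M S
    assume xy: "x \<subseteq> A1 \<union> A2" "y \<subseteq> A1 \<union> A2"
    show "0 \<le> G1 (x \<inter> A1) * G2 (x \<inter> A2)"
      by (simp add: W1.F_nonneg W2.F_nonneg)
    show "0 \<le> B x y M" if "M \<in> Match' (xor_set x y)"
      using that restrict unfolding B_def by (simp add: W1.B_nonneg W2.B_nonneg)
    show "G1 (x \<inter> A1) * G2 (x \<inter> A2) * (G1 (y \<inter> A1) * G2 (y \<inter> A2)) =
        (\<Sum>M\<in>Match' (xor_set x y). B x y M)"
    proof -
      have z: "xor_set x y \<subseteq> A1 \<union> A2" using xy by (rule xor_set_subset)
      have "(\<Sum>M\<in>Match' (xor_set x y). B x y M) = (\<Sum>M\<in>{M\<in>Match' (xor_set x y). separated M}. B x y M)"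
        using z fin by (intro sum.mono_neutral_right finite_Match') (auto simp: B_def intro: finite_subset)
      also have "\<dots> = (\<Sum>(M1, M2)\<in>Match' (xor_set x y \<inter> A1) \<times> Match' (xor_set x y \<inter> A2).
          B1 (x \<inter> A1) (y \<inter> A1) M1 * B2 (x \<inter> A2) (y \<inter> A2) M2)"
        using bij_betw_Match'_split[OF disj z] unfolding separated_def[abs_def] B_def
        by (subst sum.reindex_bij_betw[symmetric]) auto
      also have "\<dots> = (G1 (x \<inter> A1) * G1 (y \<inter> A1)) * (G2 (x \<inter> A2) * G2 (y \<inter> A2))"
        by (simp add: W1.product_eq W2.product_eq sum_product sum.cartesian_product xor_set_Int)
      finally show ?thesis by (simp add: algebra_simps)
    qed
    show "B x y M = B (xor_set x S) (xor_set y S) M" if "M \<in> Match' (xor_set x y)" "S \<in> M"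
    proof (cases "separated M")
      case True
      have flip_Int: "xor_set x S \<inter> A = xor_set (x \<inter> A) (S \<inter> A)" for x A
        unfolding xor_set_def by auto
      from True that(2) consider "S \<subseteq> A1" | "S \<subseteq> A2" unfolding separated_def by blast
      then show ?thesis
      proof cases
        case 1
        then have "S \<inter> A1 = S" "S \<inter> A2 = {}" using disj by auto
        then show ?thesis
          using W1.flip_invariant[OF Int_lower2 Int_lower2 restrict[OF that(1) True], of S] 1 that(2)
          unfolding B_def flip_Int by simp
      next
        case 2
        then have "S \<inter> A2 = S" "S \<inter> A1 = {}" using disj by auto
        then show ?thesis
          using W2.flip_invariant[OF Int_lower2 Int_lower2 restrict[OF that(1) True], of S] 2 that(2)
          unfolding B_def flip_Int by simp
      qed
    qed (simp add: B_def)
  qed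
  then show ?thesis using windable_iff_winding by blast
qed

lemma windable_empty: "windable {} (\<lambda>a. 1)"
proof -
  have "winding {} (\<lambda>a. 1) (\<lambda>_ _ _. 1)"
    by unfold_locales (auto simp: xor_set_def Match'_empty)
  then show ?thesis using windable_iff_winding by blast
qed

lemma windable_prod:
  assumes "finite V" "\<forall>v\<in>V. finite (Jv v)" "\<forall>v\<in>V. \<forall>w\<in>V. v \<noteq> w \<longrightarrow> Jv v \<inter> Jv w = {}"
    and "\<forall>v\<in>V. windable (Jv v) (F v)"
  shows "windable (\<Union>v\<in>V. Jv v) (\<lambda>a. \<Prod>v\<in>V. F v (a \<inter> Jv v))"
  using assms
proof (induction V rule: finite_induct)
  case empty
  then show ?case using windable_empty by simp
next
  case (insert w V)
  have "windable (\<Union>v\<in>V. Jv v) (\<lambda>a. \<Prod>v\<in>V. F v (a \<inter> Jv v))"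
    using insert.prems by (intro insert.IH) auto
  moreover have "Jv w \<inter> (\<Union>v\<in>V. Jv v) = {}"
    using insert.prems(2) insert.hyps(2) by auto
  ultimately have "windable (Jv w \<union> (\<Union>v\<in>V. Jv v))
      (\<lambda>a. F w (a \<inter> Jv w) * (\<Prod>v\<in>V. F v (a \<inter> (\<Union>v\<in>V. Jv v) \<inter> Jv v)))"
    using insert.prems insert.hyps(1) by (intro windable_tensor) auto
  moreover have "(\<Prod>v\<in>V. F v (a \<inter> (\<Union>v\<in>V. Jv v) \<inter> Jv v)) = (\<Prod>v\<in>V. F v (a \<inter> Jv v))" for a
  proof (rule prod.cong[OF refl])
    show "F v (a \<inter> (\<Union>v\<in>V. Jv v) \<inter> Jv v) = F v (a \<inter> Jv v)" if "v \<in> V" for v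
    proof -
      have "a \<inter> (\<Union>v\<in>V. Jv v) \<inter> Jv v = a \<inter> Jv v" using that by blast
      then show ?thesis by simp
    qed
  qed
  ultimately show ?case using insert.hyps by simp
qed

definition contract_match :: "'a \<Rightarrow> 'a \<Rightarrow> 'a set set \<Rightarrow> 'a set set" where
  "contract_match i j M = {S\<in>M. i \<notin> S \<and> j \<notin> S} \<union>
     (if \<Union>{S\<in>M. i \<in> S \<or> j \<in> S} - {i,j} = {} then {} else {\<Union>{S\<in>M. i \<in> S \<or> j \<in> S} - {i,j}})"

lemma contract_match_id:
  assumes "M \<in> Match' z" "i \<notin> z" "j \<notin> z"
  shows "contract_match i j M = M"
proof -
  have "i \<notin> S \<and> j \<notin> S" if "S \<in> M" for S
    using Match'_block_subset[OF assms(1) that] assms(2,3) by blast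
  then have unchanged: "{S\<in>M. i \<notin> S \<and> j \<notin> S} = M" and none: "{S\<in>M. i \<in> S \<or> j \<in> S} = {}"
    by auto
  show ?thesis unfolding contract_match_def unchanged none by simp
qed

lemma Match'_blocks_through:
  assumes M: "M \<in> Match' z" and "i \<in> z" "j \<in> z"
  obtains Bi Bj where "Bi \<in> M" "Bj \<in> M" "i \<in> Bi" "j \<in> Bj"
    "{S\<in>M. i \<in> S \<or> j \<in> S} = {Bi, Bj}" "Bi = Bj \<or> Bi \<inter> Bj = {}"
proof -
  obtain Bi Bj where Bi: "Bi \<in> M" "i \<in> Bi" and Bj: "Bj \<in> M" "j \<in> Bj"
    using Union_Match'[OF M] assms(2,3) by blast
  have "S = Bi" if "S \<in> M" "i \<in> S" for S
    using Match'_disjoint[OF M that(1) Bi(1)] that(2) Bi(2) by blast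
  moreover have "S = Bj" if "S \<in> M" "j \<in> S" for S
    using Match'_disjoint[OF M that(1) Bj(1)] that(2) Bj(2) by blast
  ultimately have "{S\<in>M. i \<in> S \<or> j \<in> S} = {Bi, Bj}" using Bi Bj by blast
  moreover have "Bi = Bj \<or> Bi \<inter> Bj = {}" using Match'_disjoint[OF M Bi(1) Bj(1)] by blast
  ultimately show ?thesis using that Bi Bj by blast
qed

lemma contract_match_Match':
  assumes M: "M \<in> Match' z" and ij: "i \<in> z" "j \<in> z"
  shows "contract_match i j M \<in> Match' (z - {i,j})"
proof -
  obtain Bi Bj where B: "Bi \<in> M" "Bj \<in> M" "i \<in> Bi" "j \<in> Bj"
    and through: "{S\<in>M. i \<in> S \<or> j \<in> S} = {Bi, Bj}" and "Bi = Bj \<or> Bi \<inter> Bj = {}"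
    by (rule Match'_blocks_through[OF M ij])
  define U where "U = (Bi \<union> Bj) - {i,j}"
  have R: "contract_match i j M = {S\<in>M. i \<notin> S \<and> j \<notin> S} \<union> (if U = {} then {} else {U})"
    unfolding contract_match_def through U_def by simp
  have fin: "finite Bi" "finite Bj" and card: "card Bi \<le> 2" "card Bj \<le> 2"
    using Match'_block[OF M B(1)] Match'_block[OF M B(2)] by auto
  have "U \<subseteq> (Bi - {i}) \<union> (Bj - {j})" unfolding U_def by blast
  then have "card U \<le> card ((Bi - {i}) \<union> (Bj - {j}))" using fin by (simp add: card_mono)
  also have "\<dots> \<le> card (Bi - {i}) + card (Bj - {j})" by (rule card_Un_le)
  also have "\<dots> \<le> 2" using fin card B(3,4) by simp
  finally have card_U: "card U \<le> 2" .
  have finite_U: "finite U" unfolding U_def using fin by simp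
  have U_disjoint: "X \<inter> U = {}" if "X \<in> M" "i \<notin> X" "j \<notin> X" for X
  proof -
    have "X \<noteq> Bi" "X \<noteq> Bj" using that B by auto
    then show ?thesis
      using Match'_disjoint[OF M that(1) B(1)] Match'_disjoint[OF M that(1) B(2)]
      unfolding U_def by auto
  qed
  have old_or_U: "S \<in> M \<and> i \<notin> S \<and> j \<notin> S \<or> S = U \<and> U \<noteq> {}" if "S \<in> contract_match i j M" for S
    using that unfolding R by (auto split: if_splits)
  show ?thesis
  proof (rule Match'I)
    fix S assume "S \<in> contract_match i j M"
    then consider "S \<in> M" | "S = U" "U \<noteq> {}" using old_or_U by blast
    then show "S \<noteq> {} \<and> (card S = 1 \<or> card S = 2)"
    proof cases
      case 1
      then show ?thesis using M unfolding Match'_def by blast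
    next
      case 2
      then have "card S \<noteq> 0" using finite_U by simp
      then show ?thesis using 2 card_U by auto
    qed
  next
    fix S T assume "S \<in> contract_match i j M" "T \<in> contract_match i j M" "S \<noteq> T"
    then consider "S \<in> M" "i \<notin> S" "j \<notin> S" "T \<in> M" | "S \<in> M" "i \<notin> S" "j \<notin> S" "T = U"
      | "T \<in> M" "i \<notin> T" "j \<notin> T" "S = U"
      using old_or_U by blast
    then show "S \<inter> T = {}"
    proof cases
      case 1
      then show ?thesis using Match'_disjoint[OF M] \<open>S \<noteq> T\<close> by blast
    next
      case 2
      then show ?thesis using U_disjoint by blast
    next
      case 3
      then show ?thesis using U_disjoint by blast
    qed
  next
    show "\<Union>(contract_match i j M) = z - {i,j}"
      using Union_Match'[OF M] unfolding contract_match_def by auto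
  qed
qed

lemma contract_match_new_block:
  assumes M: "M \<in> Match' z" and ij: "i \<in> z" "j \<in> z" "i \<noteq> j"
    and S: "S \<in> contract_match i j M" "S \<notin> M"
  obtains Bi Bj where "Bi \<in> M" "Bj \<in> M" "i \<in> Bi" "j \<in> Bj" "Bi \<inter> Bj = {}"
    "S = (Bi \<union> Bj) - {i,j}"
proof -
  obtain Bi Bj where B: "Bi \<in> M" "Bj \<in> M" "i \<in> Bi" "j \<in> Bj"
    and through: "{S\<in>M. i \<in> S \<or> j \<in> S} = {Bi, Bj}" and "Bi = Bj \<or> Bi \<inter> Bj = {}"
    by (rule Match'_blocks_through[OF M ij(1,2)])
  have S_eq: "S = (Bi \<union> Bj) - {i,j}" and "S \<noteq> {}"
    using S unfolding contract_match_def through by (auto split: if_splits)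
  have "Bi \<noteq> Bj"
  proof
    assume "Bi = Bj"
    then have "{i,j} \<subseteq> Bi" using B by auto
    moreover have "finite Bi" "card Bi \<le> 2" using Match'_block[OF M B(1)] by auto
    ultimately have "Bi = {i,j}" using ij(3) by (metis card_2_iff card_subset_eq le_antisym card_mono)
    then show False using S_eq \<open>S \<noteq> {}\<close> \<open>Bi = Bj\<close> by simp
  qed
  then have "Bi \<inter> Bj = {}" using \<open>Bi = Bj \<or> Bi \<inter> Bj = {}\<close> by blast
  then show ?thesis using that B S_eq by blast
qed

locale winding_contraction = winding A G B
  for A :: "'a set" and G and B +
  fixes i j :: 'a
  assumes finite_A: "finite A" and i_in_A: "i \<in> A" and j_in_A: "j \<in> A" and i_neq_j: "i \<noteq> j"
begin

definition edge_values :: "'a set set" where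
  "edge_values = {{}, {i,j}}"

definition contracted_terms :: "'a set \<Rightarrow> 'a set \<Rightarrow> ('a set \<times> 'a set \<times> 'a set set) set" where
  "contracted_terms a b = (SIGMA c:edge_values. SIGMA d:edge_values. Match' (xor_set (a \<union> c) (b \<union> d)))"

definition contracted_B :: "'a set \<Rightarrow> 'a set \<Rightarrow> 'a set set \<Rightarrow> rat" where
  "contracted_B a b M' = (\<Sum>(c, d, M)\<in>contracted_terms a b.
     if contract_match i j M = M' then B (a \<union> c) (b \<union> d) M else 0)"

lemma xor_set_glued:
  assumes "a \<subseteq> A - {i,j}" "b \<subseteq> A - {i,j}" "c \<in> edge_values" "d \<in> edge_values"
  shows "xor_set (a \<union> c) (b \<union> d) = xor_set a b \<union> (if c = d then {} else {i,j})"
  using assms i_neq_j unfolding edge_values_def xor_set_def by auto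

lemma glued_subset: "a \<subseteq> A - {i,j} \<Longrightarrow> c \<in> edge_values \<Longrightarrow> a \<union> c \<subseteq> A"
  using i_in_A j_in_A unfolding edge_values_def by auto

lemma contract_match_glued:
  assumes ab: "a \<subseteq> A - {i,j}" "b \<subseteq> A - {i,j}" and cd: "c \<in> edge_values" "d \<in> edge_values"
    and M: "M \<in> Match' (xor_set (a \<union> c) (b \<union> d))"
  shows "contract_match i j M \<in> Match' (xor_set a b)"
proof -
  have ij: "i \<notin> xor_set a b" "j \<notin> xor_set a b" using ab unfolding xor_set_def by auto
  show ?thesis
  proof (cases "c = d")
    case True
    then show ?thesis using M ij contract_match_id xor_set_glued[OF ab cd] by fastforce
  next
    case False
    then have "M \<in> Match' (xor_set a b \<union> {i,j})" using M xor_set_glued[OF ab cd] by simp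
    then have "contract_match i j M \<in> Match' (xor_set a b \<union> {i,j} - {i,j})"
      by (rule contract_match_Match') auto
    moreover have "xor_set a b \<union> {i,j} - {i,j} = xor_set a b" using ij by auto
    ultimately show ?thesis by simp
  qed
qed

lemma finite_Match'_glued:
  assumes "a \<subseteq> A - {i,j}" "b \<subseteq> A - {i,j}" "c \<in> edge_values" "d \<in> edge_values"
  shows "finite (Match' (xor_set (a \<union> c) (b \<union> d)))"
  using glued_subset[OF assms(1,3)] glued_subset[OF assms(2,4)] finite_A
  by (intro finite_Match') (meson finite_subset xor_set_subset)

lemma finite_edge_values: "finite edge_values"
  unfolding edge_values_def by simp

lemma contracted_product_eq:
  assumes ab: "a \<subseteq> A - {i,j}" "b \<subseteq> A - {i,j}"
  shows "(G a + G (a \<union> {i,j})) * (G b + G (b \<union> {i,j})) =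
    (\<Sum>M'\<in>Match' (xor_set a b). contracted_B a b M')"
proof -
  have fin: "finite (Match' (xor_set a b))"
    using ab finite_A by (intro finite_Match') (meson Diff_subset finite_subset xor_set_subset)
  have "(\<Sum>M'\<in>Match' (xor_set a b). contracted_B a b M') =
      (\<Sum>(c, d, M)\<in>contracted_terms a b. B (a \<union> c) (b \<union> d) M)"
    unfolding contracted_B_def
    by (subst sum.swap) (auto intro!: sum.cong simp: contracted_terms_def fin contract_match_glued[OF ab])
  also have "\<dots> = (\<Sum>c\<in>edge_values. \<Sum>d\<in>edge_values. \<Sum>M\<in>Match' (xor_set (a \<union> c) (b \<union> d)).
      B (a \<union> c) (b \<union> d) M)"
  proof -
    have fin_Sigma: "finite (SIGMA d:edge_values. Match' (xor_set (a \<union> c) (b \<union> d)))"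
      if "c \<in> edge_values" for c
      using finite_Match'_glued[OF ab that] finite_edge_values by blast
    have "(\<Sum>c\<in>edge_values. \<Sum>d\<in>edge_values. \<Sum>M\<in>Match' (xor_set (a \<union> c) (b \<union> d)).
        B (a \<union> c) (b \<union> d) M) =
      (\<Sum>c\<in>edge_values. \<Sum>(d, M)\<in>(SIGMA d:edge_values. Match' (xor_set (a \<union> c) (b \<union> d))).
        B (a \<union> c) (b \<union> d) M)"
      using finite_Match'_glued[OF ab] finite_edge_values by (intro sum.cong refl sum.Sigma) auto
    also have "\<dots> = (\<Sum>(c, d, M)\<in>contracted_terms a b. B (a \<union> c) (b \<union> d) M)"
      unfolding contracted_terms_def using fin_Sigma finite_edge_values by (intro sum.Sigma) auto
    finally show ?thesis ..
  qed
  also have "\<dots> = (\<Sum>c\<in>edge_values. \<Sum>d\<in>edge_values. G (a \<union> c) * G (b \<union> d))"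
    using glued_subset ab by (simp add: product_eq)
  also have "\<dots> = (G a + G (a \<union> {i,j})) * (G b + G (b \<union> {i,j}))"
    by (simp add: edge_values_def sum_product algebra_simps)
  finally show ?thesis ..
qed

definition flip_term :: "'a set \<Rightarrow> 'a set \<times> 'a set \<times> 'a set set \<Rightarrow> 'a set \<times> 'a set \<times> 'a set set" where
  "flip_term S = (\<lambda>(c, d, M). if S \<in> M then (c, d, M) else (xor_set c {i,j}, xor_set d {i,j}, M))"

lemma flip_term_flip_term [simp]: "flip_term S (flip_term S t) = t"
  unfolding flip_term_def by (auto split: prod.splits)

lemma flip_term_in_contracted_terms:
  assumes ab: "a \<subseteq> A - {i,j}" "b \<subseteq> A - {i,j}" and t: "t \<in> contracted_terms a b"
  shows "flip_term S t \<in> contracted_terms a b"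
proof -
  obtain c d M where t_eq: "t = (c, d, M)" and cd: "c \<in> edge_values" "d \<in> edge_values"
    and M: "M \<in> Match' (xor_set (a \<union> c) (b \<union> d))"
    using t unfolding contracted_terms_def by auto
  have cd': "xor_set c {i,j} \<in> edge_values" "xor_set d {i,j} \<in> edge_values"
    using cd unfolding edge_values_def xor_set_def by auto
  have "xor_set c {i,j} = xor_set d {i,j} \<longleftrightarrow> c = d"
    by (metis xor_set_xor_set_same)
  then have "xor_set (a \<union> xor_set c {i,j}) (b \<union> xor_set d {i,j}) = xor_set (a \<union> c) (b \<union> d)"
    using xor_set_glued[OF ab cd] xor_set_glued[OF ab cd'] by simp
  then show ?thesis
    using cd cd' M unfolding t_eq flip_term_def contracted_terms_def by simp
qed

lemma contracted_terms_xor_set: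
  assumes "a \<subseteq> A - {i,j}" "b \<subseteq> A - {i,j}" "a' \<subseteq> A - {i,j}" "b' \<subseteq> A - {i,j}"
    and "xor_set a' b' = xor_set a b"
  shows "contracted_terms a' b' = contracted_terms a b"
  unfolding contracted_terms_def using assms xor_set_glued by (auto intro!: Sigma_cong)

lemma B_flip_term:
  assumes ab: "a \<subseteq> A - {i,j}" "b \<subseteq> A - {i,j}" and cd: "c \<in> edge_values" "d \<in> edge_values"
    and M: "M \<in> Match' (xor_set (a \<union> c) (b \<union> d))"
    and S: "S \<in> contract_match i j M" "S \<subseteq> A - {i,j}"
  shows "(case flip_term S (c, d, M) of (c', d', M') \<Rightarrow> B (xor_set a S \<union> c') (xor_set b S \<union> d') M')
    = B (a \<union> c) (b \<union> d) M"
proof -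
  have glued: "a \<union> c \<subseteq> A" "b \<union> d \<subseteq> A" using glued_subset ab cd by auto
  have disjoint_edge: "c \<subseteq> {i,j}" "d \<subseteq> {i,j}" using cd unfolding edge_values_def by auto
  show ?thesis
  proof (cases "S \<in> M")
    case True
    have "xor_set a S \<union> c = xor_set (a \<union> c) S" "xor_set b S \<union> d = xor_set (b \<union> d) S"
      using S(2) disjoint_edge unfolding xor_set_def by auto
    then show ?thesis
      using True flip_invariant[OF glued M True] unfolding flip_term_def by simp
  next
    case False
    have "c \<noteq> d"
    proof
      assume "c = d"
      then have "M \<in> Match' (xor_set a b)" using M xor_set_glued[OF ab cd] by simp
      moreover have "i \<notin> xor_set a b" "j \<notin> xor_set a b" using ab unfolding xor_set_def by auto
      ultimately show False using S(1) False contract_match_id by metis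
    qed
    then have M_ij: "M \<in> Match' (xor_set a b \<union> {i,j})" using M xor_set_glued[OF ab cd] by simp
    obtain Bi Bj where B: "Bi \<in> M" "Bj \<in> M" "i \<in> Bi" "j \<in> Bj" "Bi \<inter> Bj = {}"
      and S_eq: "S = (Bi \<union> Bj) - {i,j}"
      by (rule contract_match_new_block[OF M_ij _ _ i_neq_j S(1) False]) auto
    have "Bi \<subseteq> A" using Match'_block_subset[OF M_ij B(1)] ab i_in_A j_in_A
      unfolding xor_set_def by blast
    then have glued': "xor_set (a \<union> c) Bi \<subseteq> A" "xor_set (b \<union> d) Bi \<subseteq> A"
      using glued xor_set_subset by blast+
    have M': "M \<in> Match' (xor_set (xor_set (a \<union> c) Bi) (xor_set (b \<union> d) Bi))" using M by simp
    have "B (a \<union> c) (b \<union> d) M = B (xor_set (xor_set (a \<union> c) Bi) Bj) (xor_set (xor_set (b \<union> d) Bi) Bj) M"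
      using flip_invariant[OF glued M B(1)] flip_invariant[OF glued' M' B(2)] by simp
    moreover have "xor_set (xor_set (u \<union> e) Bi) Bj = xor_set u S \<union> xor_set e {i,j}"
      if "u \<subseteq> A - {i,j}" "e \<subseteq> {i,j}" for u e
      using that S_eq B(3-5) unfolding xor_set_def by auto
    ultimately show ?thesis
      using False ab disjoint_edge unfolding flip_term_def by simp
  qed
qed

lemma flip_term_keeps_match: "\<exists>c' d'. flip_term S (c, d, M) = (c', d', M)"
  unfolding flip_term_def by simp

lemma contracted_B_flip:
  assumes ab: "a \<subseteq> A - {i,j}" "b \<subseteq> A - {i,j}"
    and M': "M' \<in> Match' (xor_set a b)" and S: "S \<in> M'"
  shows "contracted_B a b M' = contracted_B (xor_set a S) (xor_set b S) M'"
proof -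
  have S_sub: "S \<subseteq> A - {i,j}" using Match'_block_subset[OF M' S] ab xor_set_subset by blast
  then have ab': "xor_set a S \<subseteq> A - {i,j}" "xor_set b S \<subseteq> A - {i,j}"
    using ab xor_set_subset by blast+
  define g where "g a b = (\<lambda>(c, d, M). if contract_match i j M = M' then B (a \<union> c) (b \<union> d) M else 0)"
    for a b
  have bij: "bij_betw (flip_term S) (contracted_terms a b) (contracted_terms a b)"
    using flip_term_in_contracted_terms[OF ab]
    by (intro bij_betw_byWitness[where f' = "flip_term S"]) auto
  have "contracted_B (xor_set a S) (xor_set b S) M' = sum (g (xor_set a S) (xor_set b S)) (contracted_terms a b)"
    unfolding contracted_B_def g_def using contracted_terms_xor_set[OF ab ab'] by simp
  also have "\<dots> = (\<Sum>t\<in>contracted_terms a b. g (xor_set a S) (xor_set b S) (flip_term S t))"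
    by (rule sum.reindex_bij_betw[OF bij, symmetric])
  also have "\<dots> = sum (g a b) (contracted_terms a b)"
  proof (rule sum.cong[OF refl])
    fix t assume "t \<in> contracted_terms a b"
    then obtain c d M where t: "t = (c, d, M)" and cd: "c \<in> edge_values" "d \<in> edge_values"
      and M: "M \<in> Match' (xor_set (a \<union> c) (b \<union> d))"
      unfolding contracted_terms_def by auto
    obtain c' d' where flip: "flip_term S (c, d, M) = (c', d', M)"
      using flip_term_keeps_match by blast
    show "g (xor_set a S) (xor_set b S) (flip_term S t) = g a b t"
    proof (cases "contract_match i j M = M'")
      case True
      then show ?thesis
        using B_flip_term[OF ab cd M _ S_sub] S unfolding t g_def flip by simp
    qed (simp add: t g_def flip)
  qed
  also have "\<dots> = contracted_B a b M'" unfolding contracted_B_def g_def ..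
  finally show ?thesis ..
qed

lemma winding_contracted: "winding (A - {i,j}) (\<lambda>a. G a + G (a \<union> {i,j})) contracted_B"
proof
  fix a b M' S
  assume ab: "a \<subseteq> A - {i,j}" "b \<subseteq> A - {i,j}"
  show "0 \<le> G a + G (a \<union> {i,j})"
    using ab i_in_A j_in_A by (intro add_nonneg_nonneg F_nonneg) auto
  show "0 \<le> contracted_B a b M'"
    unfolding contracted_B_def contracted_terms_def
    using B_nonneg glued_subset ab by (intro sum_nonneg) (auto split: prod.splits)
  show "(G a + G (a \<union> {i,j})) * (G b + G (b \<union> {i,j})) = (\<Sum>M'\<in>Match' (xor_set a b). contracted_B a b M')"
    by (rule contracted_product_eq[OF ab])
  show "contracted_B a b M' = contracted_B (xor_set a S) (xor_set b S) M'"
    if "M' \<in> Match' (xor_set a b)" "S \<in> M'"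
    by (rule contracted_B_flip[OF ab that])
qed

end

lemma windable_contract:
  assumes "finite A" "windable A G" "i \<in> A" "j \<in> A" "i \<noteq> j"
  shows "windable (A - {i,j}) (\<lambda>a. G a + G (a \<union> {i,j}))"
proof -
  obtain B where "winding A G B" using assms(2) windable_iff_winding by blast
  then interpret winding_contraction A G B i j
    using assms by (simp add: winding_contraction_def winding_contraction_axioms_def)
  show ?thesis using winding_contracted windable_iff_winding by blast
qed

lemma circuit_remove_edge:
  assumes c: "circuit J V Jv A (insert e E) F" and "e \<notin> E"
  shows "circuit J V Jv (A \<union> e) E F"
proof -
  have "\<Union>(insert e E) = J - A" "\<forall>e'\<in>E. e \<inter> e' = {}" "A \<subseteq> J"
    using c \<open>e \<notin> E\<close> unfolding circuit_def by (auto simp del: Union_insert)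
  then have "\<Union>E = J - (A \<union> e)" "A \<union> e \<subseteq> J" by auto
  with c show ?thesis unfolding circuit_def by auto
qed

lemma signature_remove_edge:
  assumes c: "circuit J V Jv A (insert {i,j} E) F" and a: "a \<subseteq> A"
  shows "signature J V Jv A (insert {i,j} E) F a =
    signature J V Jv (A \<union> {i,j}) E F a + signature J V Jv (A \<union> {i,j}) E F (a \<union> {i,j})"
proof -
  have fin: "finite J" and ij: "i \<notin> A" "j \<notin> A"
    using c unfolding circuit_def by auto
  define X where "X b = {x. assignment J E x \<and> x \<inter> (A \<union> {i,j}) = b}" for b
  have "{x. assignment J (insert {i,j} E) x \<and> x \<inter> A = a} = X a \<union> X (a \<union> {i,j})"
    unfolding X_def assignment_def using a ij by auto
  moreover have "finite (X b)" for b
    unfolding X_def assignment_def using fin by (auto intro: finite_subset[of _ "Pow J"])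
  moreover have "X a \<inter> X (a \<union> {i,j}) = {}" unfolding X_def using a ij by auto
  ultimately show ?thesis unfolding signature_def X_def[symmetric] by (simp add: sum.union_disjoint)
qed

lemma windable_signature_finite_edges:
  assumes "finite E" "circuit J V Jv A E F" and windable: "\<forall>v\<in>V. windable (Jv v) (F v)"
  shows "windable A (signature J V Jv A E F)"
  using assms(1,2)
proof (induction E arbitrary: A rule: finite_induct)
  case empty
  then have "A = J" and fin: "finite V" "\<forall>v\<in>V. finite (Jv v)"
    and partition: "(\<Union>v\<in>V. Jv v) = J" "\<forall>v\<in>V. \<forall>w\<in>V. v \<noteq> w \<longrightarrow> Jv v \<inter> Jv w = {}"
    unfolding circuit_def by (auto intro: finite_subset)
  moreover have "signature J V Jv J {} F a = (\<Prod>v\<in>V. F v (a \<inter> Jv v))" if "a \<subseteq> J" for a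
  proof -
    have "{x. assignment J {} x \<and> x \<inter> J = a} = {a}" using that unfolding assignment_def by auto
    then show ?thesis unfolding signature_def wt_def by simp
  qed
  ultimately show ?case
    using windable_prod[OF fin partition(2) windable] by (auto elim: windable_cong)
next
  case (insert e E)
  have "card e = 2" "e \<subseteq> J - A" "A \<subseteq> J" "finite J"
    using insert.prems unfolding circuit_def by auto
  then obtain i j where e: "e = {i,j}" "i \<noteq> j"
    by (meson card_2_iff)
  have "A \<union> e \<subseteq> J" using \<open>A \<subseteq> J\<close> \<open>e \<subseteq> J - A\<close> by blast
  then have "finite (A \<union> e)" using \<open>finite J\<close> by (rule finite_subset)
  have "A \<union> e - {i,j} = A" using \<open>e \<subseteq> J - A\<close> e(1) by blast
  have "windable (A \<union> e) (signature J V Jv (A \<union> e) E F)"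
    by (rule insert.IH[OF circuit_remove_edge[OF insert.prems insert.hyps(2)]])
  then have "windable (A \<union> e - {i,j})
      (\<lambda>a. signature J V Jv (A \<union> e) E F a + signature J V Jv (A \<union> e) E F (a \<union> {i,j}))"
    by (rule windable_contract[OF \<open>finite (A \<union> e)\<close>]) (simp_all add: e)
  then have "windable A
      (\<lambda>a. signature J V Jv (A \<union> e) E F a + signature J V Jv (A \<union> e) E F (a \<union> {i,j}))"
    unfolding \<open>A \<union> e - {i,j} = A\<close> .
  then show ?case
    by (rule windable_cong) (simp add: signature_remove_edge[OF insert.prems[unfolded e(1)]] e(1))
qed

theorem lemma9:
  assumes "circuit J V Jv A E F"
    and "\<forall>v\<in>V. windable (Jv v) (F v)"
  shows "windable A (signature J V Jv A E F)"
proof -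
  have "E \<subseteq> Pow J" "finite J" using assms(1) unfolding circuit_def by auto
  then have "finite E" by (simp add: finite_subset)
  then show ?thesis using windable_signature_finite_edges assms by blast
qed

end
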